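(* Let $C$ be a linear code over $\mathbb{Z}_4+u\mathbb{Z}_4$ of length $n$ and $C^{\perp}$ its dual. Then $$Lee_{C^{\perp}}(W,X)=\frac{1}{|C|}\,Lee_C(W+X,W-X).$$
   Context: $\mathbb{Z}_4+u\mathbb{Z}_4$ is the commutative ring of characteristic $4$ with $u^2=0$; a linear code of length $n$ is a submodule of $(\mathbb{Z}_4+u\mathbb{Z}_4)^n$, and $C^\perp$ is its dual with respect to the Euclidean inner product $\sum_i x_iy_i$ computed in the ring. The Lee weight on $\mathbb{Z}_4$ is $0,1,2,1$ for $0,1,2,3$; the Lee weight on $\mathbb{Z}_4+u\mathbb{Z}_4$ is $w_L(a+ub)=w_L(b)+w_L(a+b)$, extended additively to vectors. The Lee weight enumerator is $Lee_C(W,X)=\sum_{c\in C}W^{4n-w_L(c)}X^{w_L(c)}$. *)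

theory Defs
  imports Complex_Main "HOL-Library.Numeral_Type" "HOL-Library.Product_Plus"
begin

text \<open>The ring Z4 + uZ4 with u^2 = 0. An element a + u b is represented by the
  pair (a, b) :: 4 \<times> 4, where the type 4 is Z/4Z. Addition, zero and
  negation are componentwise (from Product_Plus); multiplication is
  (a + u b)(c + u d) = ac + u(ad + bc).\<close>

type_synonym zu = "4 \<times> 4"

definition zu_mult :: "zu \<Rightarrow> zu \<Rightarrow> zu" where
  "zu_mult x y = (fst x * fst y, fst x * snd y + snd x * fst y)"

definition vecs :: "nat \<Rightarrow> (nat \<Rightarrow> zu) set" where
  "vecs n = {v. \<forall>i. n \<le> i \<longrightarrow> v i = 0}"

definition smult_zu :: "zu \<Rightarrow> (nat \<Rightarrow> zu) \<Rightarrow> (nat \<Rightarrow> zu)" where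
  "smult_zu r v = (\<lambda>i. zu_mult r (v i))"

definition linear_code :: "nat \<Rightarrow> (nat \<Rightarrow> zu) set \<Rightarrow> bool" where
  "linear_code n C \<longleftrightarrow> C \<subseteq> vecs n \<and> (\<lambda>i. 0) \<in> C
     \<and> (\<forall>x\<in>C. \<forall>y\<in>C. (\<lambda>i. x i + y i) \<in> C)
     \<and> (\<forall>r. \<forall>x\<in>C. smult_zu r x \<in> C)"

definition inner_zu :: "nat \<Rightarrow> (nat \<Rightarrow> zu) \<Rightarrow> (nat \<Rightarrow> zu) \<Rightarrow> zu" where
  "inner_zu n x y = (\<Sum>i<n. zu_mult (x i) (y i))"

definition dual_code :: "nat \<Rightarrow> (nat \<Rightarrow> zu) set \<Rightarrow> (nat \<Rightarrow> zu) set" where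
  "dual_code n C = {y \<in> vecs n. \<forall>x\<in>C. inner_zu n x y = 0}"

definition lee4 :: "4 \<Rightarrow> nat" where
  "lee4 a = (if a = 0 then 0 else if a = 2 then 2 else 1)"

definition lee_zu :: "zu \<Rightarrow> nat" where
  "lee_zu x = lee4 (snd x) + lee4 (fst x + snd x)"

definition lee_wt :: "nat \<Rightarrow> (nat \<Rightarrow> zu) \<Rightarrow> nat" where
  "lee_wt n v = (\<Sum>i<n. lee_zu (v i))"

definition lee_enum :: "nat \<Rightarrow> (nat \<Rightarrow> zu) set \<Rightarrow> real \<Rightarrow> real \<Rightarrow> real" where
  "lee_enum n C W X = (\<Sum>c\<in>C. W ^ (4 * n - lee_wt n c) * X ^ lee_wt n c)"

end

theory Submission
  imports Defs "HOL-Library.FuncSet"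
begin

text \<open>The map \<open>\<chi>(a + u b) = \<i>^(a + b)\<close> is an additive character of \<open>R = \<int>\<^sub>4 + u\<int>\<^sub>4\<close>,
  and it is nondegenerate: every nonzero \<open>t\<close> has a multiple \<open>r t = 2u\<close>, and \<open>\<chi>(2u) = -1\<close>.
  For one coordinate, \<open>\<Sum>\<^sub>s \<chi>(r s) W^(4 - wt s) X^(wt s) = (W+X)^(4 - wt r) (W-X)^(wt r)\<close>,
  a finite check over the sixteen elements of \<open>R\<close>. Taking products over the coordinates
  and summing over \<open>C\<close> turns \<open>Lee\<^sub>C(W+X, W-X)\<close> into \<open>\<Sum>\<^sub>y (\<Sum>\<^sub>c\<^sub>\<in>\<^sub>C \<chi>(c\<cdot>y)) W^(4n - wt y) X^(wt y)\<close>.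
  The inner sum is \<open>|C|\<close> for \<open>y \<in> C\<^sup>\<bottom>\<close> and \<open>0\<close> otherwise, because translating \<open>C\<close> by
  a codeword \<open>x\<close> with \<open>x\<cdot>y = 2u\<close> changes its sign.\<close>

lemma UNIV_4: "(UNIV :: 4 set) = {0, 1, 2, 3}"
proof -
  have "card {0 :: 4, 1, 2, 3} = card (UNIV :: 4 set)" by simp
  then show ?thesis using card_subset_eq[of "UNIV :: 4 set" "{0, 1, 2, 3}"] by simp
qed

lemma sum_UNIV_4: "(\<Sum>a\<in>UNIV. f a) = f (0 :: 4) + f 1 + f 2 + f 3"
  unfolding UNIV_4 by (simp add: add.assoc)

lemma sum_UNIV_zu: "(\<Sum>s\<in>UNIV. f s) = (\<Sum>a\<in>UNIV. \<Sum>b\<in>UNIV. f (a, b :: 4))"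
  by (simp add: UNIV_Times_UNIV[symmetric] sum.cartesian_product del: UNIV_Times_UNIV)

lemma zu_mult_add_left: "zu_mult (a + b) c = zu_mult a c + zu_mult b c"
  by (simp add: zu_mult_def prod_eq_iff algebra_simps)

lemma zu_mult_add_right: "zu_mult c (a + b) = zu_mult c a + zu_mult c b"
  by (simp add: zu_mult_def prod_eq_iff algebra_simps)

lemma zu_mult_zero_right [simp]: "zu_mult c 0 = 0"
  by (simp add: zu_mult_def prod_eq_iff)

lemma zu_mult_assoc: "zu_mult (zu_mult r a) c = zu_mult r (zu_mult a c)"
  by (simp add: zu_mult_def prod_eq_iff algebra_simps)

lemma zu_mult_minus_one: "zu_mult (-1, 0) p = - p"
  by (simp add: zu_mult_def prod_eq_iff)

lemma zu_mult_sum: "finite A \<Longrightarrow> zu_mult r (\<Sum>i\<in>A. f i) = (\<Sum>i\<in>A. zu_mult r (f i))"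
  by (induction A rule: finite_induct) (simp_all add: zu_mult_add_right)

lemma zu_mult_eq_2u:
  assumes "t \<noteq> 0"
  shows "\<exists>r. zu_mult r t = (0, 2)"
proof -
  obtain a b where t: "t = (a, b)" by force
  have "a \<in> {0, 1, 2, 3}" "b \<in> {0, 1, 2, 3}" by (simp_all add: UNIV_4[symmetric])
  then have "\<exists>c\<in>{0, 1, 2, 3 :: 4}. \<exists>d\<in>{0, 1, 2, 3 :: 4}. zu_mult (c, d) t = (0, 2)"
    using assms unfolding t by (elim insertE; auto simp: zu_mult_def zero_prod_def)
  then show ?thesis by blast
qed

lemma lee_zu_le_4: "lee_zu s \<le> 4"
  by (simp add: lee_zu_def lee4_def)

lemma inner_zu_add_left: "inner_zu n (\<lambda>i. x i + z i) y = inner_zu n x y + inner_zu n z y"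
  by (simp add: inner_zu_def zu_mult_add_left sum.distrib)

lemma inner_zu_smult_left: "inner_zu n (smult_zu r x) y = zu_mult r (inner_zu n x y)"
  by (simp add: inner_zu_def smult_zu_def zu_mult_sum zu_mult_assoc)

lemma finite_vecs: "finite (vecs n)"
proof -
  have "vecs n = {f. \<forall>x. (x \<in> {..<n} \<longrightarrow> f x \<in> UNIV) \<and> (x \<notin> {..<n} \<longrightarrow> f x = 0)}"
    by (auto simp: vecs_def not_less)
  then show ?thesis using finite_set_of_finite_funs[of "{..<n}" "UNIV :: zu set" 0] by simp
qed

definition i_power :: "4 \<Rightarrow> complex" where
  "i_power a = (if a = 0 then 1 else if a = 1 then \<i> else if a = 2 then -1 else -\<i>)"

definition zu_char :: "zu \<Rightarrow> complex" where
  "zu_char r = i_power (fst r + snd r)"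

lemma i_power_add: "i_power (a + b) = i_power a * i_power b"
proof -
  have "a \<in> {0, 1, 2, 3}" "b \<in> {0, 1, 2, 3}" by (simp_all add: UNIV_4[symmetric])
  then show ?thesis by (auto simp: i_power_def)
qed

lemma zu_char_add: "zu_char (a + b) = zu_char a * zu_char b"
proof -
  have "fst (a + b) + snd (a + b) = (fst a + snd a) + (fst b + snd b)"
    by (simp add: algebra_simps)
  then show ?thesis by (simp add: zu_char_def i_power_add)
qed

lemma zu_char_zero [simp]: "zu_char 0 = 1"
  by (simp add: zu_char_def i_power_def)

lemma zu_char_2u: "zu_char (0, 2) = -1"
  by (simp add: zu_char_def i_power_def)

lemma zu_char_sum: "finite A \<Longrightarrow> zu_char (\<Sum>i\<in>A. f i) = (\<Prod>i\<in>A. zu_char (f i))"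
  by (induction A rule: finite_induct) (simp_all add: zu_char_add)

lemma sum_zu_char_code:
  assumes C: "linear_code n C" and y: "y \<in> vecs n"
  shows "(\<Sum>x\<in>C. zu_char (inner_zu n x y)) = (if y \<in> dual_code n C then of_nat (card C) else 0)"
proof (cases "y \<in> dual_code n C")
  case True
  then have "(\<Sum>x\<in>C. zu_char (inner_zu n x y)) = (\<Sum>x\<in>C. 1)"
    by (intro sum.cong refl) (simp add: dual_code_def)
  then show ?thesis using True by simp
next
  case False
  have add: "\<And>x z. x \<in> C \<Longrightarrow> z \<in> C \<Longrightarrow> (\<lambda>i. x i + z i) \<in> C"
    and smult: "\<And>r x. x \<in> C \<Longrightarrow> smult_zu r x \<in> C"
    using C unfolding linear_code_def by blast+
  from False y obtain x0 where x0: "x0 \<in> C" "inner_zu n x0 y \<noteq> 0"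
    by (auto simp: dual_code_def)
  obtain r where r: "zu_mult r (inner_zu n x0 y) = (0, 2)"
    using zu_mult_eq_2u[OF x0(2)] by blast
  define x1 where "x1 = smult_zu r x0"
  have x1: "x1 \<in> C" "inner_zu n x1 y = (0, 2)"
    using smult x0 r by (simp_all add: x1_def inner_zu_smult_left)
  have minus_x1: "(\<lambda>i. z i - x1 i) \<in> C" if "z \<in> C" for z
    using add[OF that smult[OF x1(1), of "(-1, 0)"]]
    by (simp add: smult_zu_def zu_mult_minus_one)
  have translate: "bij_betw (\<lambda>x i. x i + x1 i) C C"
    by (rule bij_betw_byWitness[where f' = "\<lambda>z i. z i - x1 i"])
       (auto intro: add x1(1) minus_x1)
  define S where "S = (\<Sum>x\<in>C. zu_char (inner_zu n x y))"
  have "S = (\<Sum>x\<in>C. zu_char (inner_zu n (\<lambda>i. x i + x1 i) y))"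
    unfolding S_def by (rule sum.reindex_bij_betw[OF translate, symmetric])
  also have "\<dots> = - S"
    by (simp add: S_def inner_zu_add_left zu_char_add x1 zu_char_2u sum_negf)
  finally show ?thesis using False by (simp add: S_def)
qed

definition lee_monomial :: "complex \<Rightarrow> complex \<Rightarrow> zu \<Rightarrow> complex" where
  "lee_monomial w x s = w ^ (4 - lee_zu s) * x ^ lee_zu s"

definition lee_monomial_vec :: "nat \<Rightarrow> complex \<Rightarrow> complex \<Rightarrow> (nat \<Rightarrow> zu) \<Rightarrow> complex" where
  "lee_monomial_vec n w x y = (\<Prod>i<n. lee_monomial w x (y i))"

lemma lee_monomial_hadamard:
  "(\<Sum>s\<in>UNIV. zu_char (zu_mult r s) * lee_monomial w x s) = lee_monomial (w + x) (w - x) r"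
proof -
  have "\<forall>a\<in>UNIV. \<forall>b\<in>UNIV. (\<Sum>s\<in>UNIV. zu_char (zu_mult (a, b) s) * lee_monomial w x s)
          = lee_monomial (w + x) (w - x) (a, b)"
    unfolding UNIV_4 ball_simps sum_UNIV_zu sum_UNIV_4
    by (intro conjI)
       (simp_all add: zu_char_def i_power_def lee_monomial_def zu_mult_def lee_zu_def lee4_def,
        algebra+)
  then show ?thesis by (cases r) simp
qed

lemma lee_monomial_vec_hadamard:
  "lee_monomial_vec n (w + x) (w - x) v
     = (\<Sum>y\<in>vecs n. zu_char (inner_zu n v y) * lee_monomial_vec n w x y)"
proof -
  let ?F = "\<lambda>i s. zu_char (zu_mult (v i) s) * lee_monomial w x s"
  let ?P = "PiE {..<n} (\<lambda>_. UNIV :: zu set)"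
  define extend where "extend = (\<lambda>g :: nat \<Rightarrow> zu. \<lambda>i. if i < n then g i else 0)"
  have extend_bij: "bij_betw extend ?P (vecs n)"
    by (rule bij_betw_byWitness[where f' = "\<lambda>y. restrict y {..<n}"])
       (auto simp: extend_def vecs_def fun_eq_iff PiE_def extensional_def not_less)
  have "lee_monomial_vec n (w + x) (w - x) v = (\<Prod>i<n. \<Sum>s\<in>UNIV. ?F i s)"
    by (simp add: lee_monomial_vec_def lee_monomial_hadamard)
  also have "\<dots> = (\<Sum>g\<in>?P. \<Prod>i<n. ?F i (g i))"
    by (rule prod_sum_PiE) auto
  also have "\<dots> = (\<Sum>g\<in>?P. \<Prod>i<n. ?F i (extend g i))"
    by (intro sum.cong refl prod.cong) (auto simp: extend_def)
  also have "\<dots> = (\<Sum>y\<in>vecs n. \<Prod>i<n. ?F i (y i))"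
    using sum.reindex_bij_betw[OF extend_bij, of "\<lambda>y. \<Prod>i<n. ?F i (y i)"] .
  also have "\<dots> = (\<Sum>y\<in>vecs n. zu_char (inner_zu n v y) * lee_monomial_vec n w x y)"
    by (simp add: inner_zu_def zu_char_sum lee_monomial_vec_def prod.distrib)
  finally show ?thesis .
qed

lemma of_real_lee_enum:
  "complex_of_real (lee_enum n S W X) = (\<Sum>c\<in>S. lee_monomial_vec n (of_real W) (of_real X) c)"
proof -
  have "complex_of_real (W ^ (4 * n - lee_wt n c) * X ^ lee_wt n c)
          = lee_monomial_vec n (of_real W) (of_real X) c" for c
  proof -
    have "(\<Sum>i<n. 4 - lee_zu (c i)) = 4 * n - lee_wt n c"
      using sum_subtractf_nat[of "{..<n}" "\<lambda>i. lee_zu (c i)" "\<lambda>_. 4"]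
      by (simp add: lee_zu_le_4 lee_wt_def)
    then have "lee_monomial_vec n (of_real W) (of_real X) c
        = of_real W ^ (4 * n - lee_wt n c) * of_real X ^ lee_wt n c"
      by (simp add: lee_monomial_vec_def lee_monomial_def prod.distrib power_sum[symmetric] lee_wt_def)
    then show ?thesis by simp
  qed
  then show ?thesis
    unfolding lee_enum_def of_real_sum by simp
qed

theorem theorem3p10:
  fixes n :: nat and C :: "(nat \<Rightarrow> zu) set" and W X :: real
  assumes "linear_code n C"
  shows "lee_enum n (dual_code n C) W X
           = (1 / real (card C)) * lee_enum n C (W + X) (W - X)"
proof -
  define D where "D = dual_code n C"
  let ?m = "lee_monomial_vec n (of_real W) (of_real X)"
  have "C \<subseteq> vecs n" "(\<lambda>i. 0) \<in> C" using assms by (auto simp: linear_code_def)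
  then have "card C > 0" using finite_subset[OF _ finite_vecs] card_gt_0_iff by blast
  have "D \<subseteq> vecs n" by (auto simp: D_def dual_code_def)
  have "complex_of_real (lee_enum n C (W + X) (W - X))
          = (\<Sum>c\<in>C. \<Sum>y\<in>vecs n. zu_char (inner_zu n c y) * ?m y)"
    by (simp add: of_real_lee_enum lee_monomial_vec_hadamard)
  also have "\<dots> = (\<Sum>y\<in>vecs n. (\<Sum>c\<in>C. zu_char (inner_zu n c y)) * ?m y)"
    by (simp add: sum.swap[of _ C] sum_distrib_right)
  also have "\<dots> = (\<Sum>y\<in>vecs n. if y \<in> D then of_nat (card C) * ?m y else 0)"
    by (intro sum.cong refl) (simp add: sum_zu_char_code[OF assms] D_def)
  also have "\<dots> = of_nat (card C) * (\<Sum>y\<in>D. ?m y)"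
    using \<open>D \<subseteq> vecs n\<close> finite_vecs by (simp add: sum.If_cases sum_distrib_left Int_absorb1)
  also have "\<dots> = complex_of_real (real (card C) * lee_enum n D W X)"
    by (simp add: of_real_lee_enum)
  finally have "lee_enum n C (W + X) (W - X) = real (card C) * lee_enum n D W X"
    using of_real_eq_iff by blast
  with \<open>card C > 0\<close> show ?thesis by (simp add: D_def)
qed

end
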